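(* Let $d\ge 0$ and $r\ge 2$ be integers, let $\langle\cdot,\cdot\rangle$ be any inner product on $\mathbb{R}[x]_{2d}$ with induced norm $\|\cdot\|$, and let $p\in\mathbb{R}[x]_{2d}$ be a univariate polynomial with $p(x)\ge 0$ for all $x\in\mathbb{R}$. Define $f_p:\mathbb{R}[x]_d^r\to\mathbb{R}$ by $f_p(u_1,\dots,u_r)=\big\|\sum_{i=1}^r u_i^2-p\big\|^2$. If $\mathbf{u}\in\mathbb{R}[x]_d^r$ satisfies $\nabla f_p(\mathbf{u})=0$ and $\nabla^2 f_p(\mathbf{u})\succeq 0$, then $f_p(\mathbf{u})=0$.
   Context: $\mathbb{R}[x]_d$ denotes the real vector space of univariate real polynomials of degree at most $d$; $\mathbb{R}[x]_d^r$ is the space of $r$-tuples of such polynomials, viewed as a finite-dimensional real vector space (e.g. via coefficients). Gradient and Hessian are taken with respect to this vector space structure: $\nabla f_p(\mathbf{u})=0$ means the directional derivative of $f_p$ at $\mathbf{u}$ vanishes in every direction $\mathbf{v}\in\mathbb{R}[x]_d^r$, and $\nabla^2 f_p(\mathbf{u})\succeq0$ means the second directional derivative $\frac{d^2}{d\epsilon^2}f_p(\mathbf{u}+\epsilon\mathbf{v})|_{\epsilon=0}$ is nonnegative for every $\mathbf{v}$. *)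

theory Defs
  imports "HOL-Analysis.Analysis" "HOL-Computational_Algebra.Polynomial"
begin

definition is_inner_product_on :: "nat \<Rightarrow> (real poly \<Rightarrow> real poly \<Rightarrow> real) \<Rightarrow> bool" where
  "is_inner_product_on n ip \<longleftrightarrow>
     (\<forall>a b. degree a \<le> n \<longrightarrow> degree b \<le> n \<longrightarrow> ip a b = ip b a) \<and>
     (\<forall>a b c. degree a \<le> n \<longrightarrow> degree b \<le> n \<longrightarrow> degree c \<le> n \<longrightarrow> ip (a + b) c = ip a c + ip b c) \<and>
     (\<forall>t a b. degree a \<le> n \<longrightarrow> degree b \<le> n \<longrightarrow> ip (smult t a) b = t * ip a b) \<and>
     (\<forall>a. degree a \<le> n \<longrightarrow> a \<noteq> 0 \<longrightarrow> ip a a > 0)"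

text \<open>f_p(u_1,...,u_r) = || sum_i u_i^2 - p ||^2, with tuples represented as functions on {..<r}.\<close>
definition fp :: "(real poly \<Rightarrow> real poly \<Rightarrow> real) \<Rightarrow> nat \<Rightarrow> real poly \<Rightarrow> (nat \<Rightarrow> real poly) \<Rightarrow> real" where
  "fp ip r p u = (let q = (\<Sum>i<r. (u i)^2) - p in ip q q)"

definition poly_tuples :: "nat \<Rightarrow> nat \<Rightarrow> (nat \<Rightarrow> real poly) set" where
  "poly_tuples d r = {u. \<forall>i<r. degree (u i) \<le> d}"

definition line_restr :: "((nat \<Rightarrow> real poly) \<Rightarrow> real) \<Rightarrow> (nat \<Rightarrow> real poly) \<Rightarrow> (nat \<Rightarrow> real poly) \<Rightarrow> real \<Rightarrow> real" where
  "line_restr f u v = (\<lambda>\<epsilon>. f (\<lambda>i. u i + smult \<epsilon> (v i)))"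

definition grad_zero :: "nat \<Rightarrow> nat \<Rightarrow> ((nat \<Rightarrow> real poly) \<Rightarrow> real) \<Rightarrow> (nat \<Rightarrow> real poly) \<Rightarrow> bool" where
  "grad_zero d r f u \<longleftrightarrow> (\<forall>v\<in>poly_tuples d r. (line_restr f u v has_real_derivative 0) (at 0))"

definition hess_psd :: "nat \<Rightarrow> nat \<Rightarrow> ((nat \<Rightarrow> real poly) \<Rightarrow> real) \<Rightarrow> (nat \<Rightarrow> real poly) \<Rightarrow> bool" where
  "hess_psd d r f u \<longleftrightarrow> (\<forall>v\<in>poly_tuples d r. deriv (deriv (line_restr f u v)) 0 \<ge> 0)"

end

theory Submission
  imports Defs "HOL-Computational_Algebra.Fundamental_Theorem_Algebra"
    "HOL-Computational_Algebra.Polynomial_Factorial" "HOL-Computational_Algebra.Field_as_Ring"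
    "HOL-Number_Theory.Cong"
begin

text \<open>
  Put \<open>q = \<Sum>i u\<^sub>i\<^sup>2 - p\<close> and \<open>\<phi> = ip q\<close>. The first-order condition says
  \<open>\<phi> (u\<^sub>i X) = 0\<close> for \<open>deg X \<le> d\<close>; in particular \<open>\<phi> (\<Sum>i u\<^sub>i\<^sup>2) = 0\<close>, so
  \<open>f\<^sub>p(u) = ip q q = - \<phi> p\<close> and it suffices to show \<open>\<phi> p \<ge> 0\<close>. The second-order condition
  \<open>2 \<parallel>\<Sum>i u\<^sub>i v\<^sub>i\<parallel>\<^sup>2 + \<phi> (\<Sum>i v\<^sub>i\<^sup>2) \<ge> 0\<close>, taken along a syzygy \<open>(k\<^sub>1, k\<^sub>2)\<close> of two of
  the \<open>u\<^sub>i\<close>, gives \<open>\<phi> (k\<^sub>1\<^sup>2 + k\<^sub>2\<^sup>2) \<ge> 0\<close>, and equality forces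
  \<open>\<phi> (a k\<^sub>1 + b k\<^sub>2) = 0\<close> for all \<open>a, b\<close>.

  After a Moebius substitution \<open>u\<^sub>1\<close> has full degree \<open>d\<close>, so \<open>\<phi>\<close> extends, by reduction
  modulo \<open>u\<^sub>1\<close>, to a linear functional \<open>L\<close> on all of \<open>\<real>[x]\<close> that vanishes on the ideal
  generated by \<open>g = gcd u\<^sub>1 u\<^sub>2\<close>. Writing \<open>u\<^sub>i = g w\<^sub>i\<close>, the syzygies
  \<open>(w\<^sub>2 t, - w\<^sub>1 t)\<close> show \<open>L (\<sigma> t\<^sup>2) \<ge> 0\<close> for the positive weight
  \<open>\<sigma> = w\<^sub>1\<^sup>2 + w\<^sub>2\<^sup>2\<close>, and that \<open>t\<close> annihilates \<open>L\<close> when equality holds. Hence the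
  annihilator ideal of \<open>L\<close> is generated by a squarefree polynomial \<open>N\<close> with only real roots;
  interpolating \<open>sqrt (p / \<sigma>)\<close> at these roots gives \<open>p \<equiv> \<sigma> t\<^sup>2 (mod N)\<close>, so
  \<open>L p = L (\<sigma> t\<^sup>2) \<ge> 0\<close>. If all \<open>u\<^sub>i\<close> vanish, \<open>\<phi>\<close> is nonnegative on squares and \<open>p\<close> is a
  sum of squares.
\<close>

section \<open>Nonnegative univariate polynomials\<close>

lemma quadratic_dvd_of_nonreal_root:
  fixes F :: "real poly" and z :: complex
  assumes root: "poly (map_poly of_real F) z = 0" and "Im z \<noteq> 0"
  shows "[:Re z ^ 2 + Im z ^ 2, - 2 * Re z, 1:] dvd F"
proof -
  let ?C = "map_poly (of_real :: real \<Rightarrow> complex)"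
  have C_add: "?C (P + Q) = ?C P + ?C Q" and C_mult: "?C (P * Q) = ?C P * ?C Q" for P Q
    by (rule poly_eqI; simp add: coeff_map_poly coeff_mult)+
  define G where "G = [:Re z ^ 2 + Im z ^ 2, - 2 * Re z, 1:]"
  have G_z: "poly (?C G) z = 0"
    by (simp add: G_def map_poly_pCons complex_eq_iff power2_eq_square algebra_simps)
  define t where "t = F mod G"
  have "?C F = ?C G * ?C (F div G) + ?C t"
    unfolding t_def by (metis C_add C_mult div_mult_mod_eq mult.commute)
  with root G_z have t_z: "poly (?C t) z = 0" by simp
  have "degree t < 2"
    using degree_mod_less [of G F] by (cases "t = 0") (auto simp: t_def G_def)
  then have t_lin: "t = [:coeff t 0, coeff t 1:]"
    by (intro poly_eqI) (auto simp: coeff_pCons coeff_eq_0 split: nat.split)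
  moreover have "poly (?C [:coeff t 0, coeff t 1:]) z = of_real (coeff t 0) + of_real (coeff t 1) * z"
    by (simp add: map_poly_pCons)
  ultimately have "of_real (coeff t 0) + of_real (coeff t 1) * z = 0"
    using t_z by simp
  with \<open>Im z \<noteq> 0\<close> have "coeff t 0 = 0" "coeff t 1 = 0"
    by (auto simp: complex_eq_iff)
  with t_lin show ?thesis
    by (simp add: t_def G_def mod_eq_0_iff_dvd)
qed

lemma real_poly_root_or_quadratic_factor:
  fixes F :: "real poly"
  assumes "degree F > 0"
  shows "(\<exists>a. poly F a = 0) \<or> (\<exists>\<beta> \<gamma>. \<beta>\<^sup>2 < 4 * \<gamma> \<and> [:\<gamma>, \<beta>, 1:] dvd F)"
proof -
  have "\<not> constant (poly (map_poly of_real F :: complex poly))"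
    using assms by (simp add: constant_degree degree_map_poly)
  then obtain z :: complex where z: "poly (map_poly of_real F) z = 0"
    using fundamental_theorem_of_algebra by blast
  show ?thesis
  proof (cases "Im z = 0")
    case True
    then have "z = of_real (Re z)"
      by (simp add: complex_eq_iff)
    moreover have "poly (map_poly of_real F) (of_real x :: complex) = of_real (poly F x)" for x
      by (induction F) (auto simp: map_poly_pCons)
    ultimately have "poly F (Re z) = 0"
      using z by (metis of_real_eq_0_iff)
    then show ?thesis by blast
  next
    case False
    then have "(- 2 * Re z)\<^sup>2 < 4 * (Re z ^ 2 + Im z ^ 2)"
      by (simp add: power2_eq_square) (meson not_real_square_gt_zero)
    with quadratic_dvd_of_nonreal_root [OF z False] show ?thesis
      by blast
  qed
qed

lemma poly_nonneg_at_isolated_point: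
  fixes f :: "real poly"
  assumes "\<And>x. x \<noteq> a \<Longrightarrow> poly f x \<ge> 0"
  shows "poly f a \<ge> 0"
proof (rule tendsto_lowerbound)
  show "(poly f \<longlongrightarrow> poly f a) (at a)"
    by (simp add: isCont_def [symmetric])
  show "\<forall>\<^sub>F x in at a. 0 \<le> poly f x"
    using assms by (auto simp: eventually_at_filter)
qed (rule trivial_limit_at)

lemma nonneg_poly_root_squared_dvd:
  fixes p :: "real poly"
  assumes nonneg: "\<forall>x. poly p x \<ge> 0" and root: "poly p a = 0"
  shows "[:-a, 1:]\<^sup>2 dvd p"
proof -
  obtain p1 where p1: "p = [:-a, 1:] * p1"
    using root by (metis poly_eq_0_iff_dvd dvd_def)
  have "poly (pderiv p) a = 0"
    using DERIV_local_min [OF poly_DERIV zero_less_one] nonneg root by simp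
  moreover have "pderiv p = [:-a, 1:] * pderiv p1 + p1"
    unfolding p1 pderiv_mult by (simp add: pderiv_pCons)
  ultimately have "poly p1 a = 0" by simp
  then obtain p2 where "p1 = [:-a, 1:] * p2"
    by (metis poly_eq_0_iff_dvd dvd_def)
  with p1 have "p = [:-a, 1:]\<^sup>2 * p2"
    by (simp only: power2_eq_square mult.assoc)
  then show ?thesis by (rule dvdI)
qed

lemma nonneg_poly_quadratic_factor:
  fixes p :: "real poly"
  assumes nonneg: "\<forall>x. poly p x \<ge> 0" and "degree p > 0"
  obtains a c s where "p = ([:a, 1:]\<^sup>2 + [:c:]\<^sup>2) * s" and "\<forall>x. poly s x \<ge> 0"
proof -
  have cofactor_nonneg: "\<forall>x. poly s x \<ge> 0"
    if p: "p = G * s" and G: "\<And>x. x \<noteq> b \<Longrightarrow> poly G x > 0" for G s and b :: real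
  proof
    fix x
    have "poly s y \<ge> 0" if "y \<noteq> b" for y
      using nonneg [rule_format, of y] G [OF that] unfolding p by (simp add: zero_le_mult_iff)
    then show "poly s x \<ge> 0"
      by (cases "x = b") (auto intro: poly_nonneg_at_isolated_point)
  qed
  from real_poly_root_or_quadratic_factor [OF \<open>degree p > 0\<close>]
  consider (root) a where "poly p a = 0"
    | (quadratic) \<beta> \<gamma> where "\<beta>\<^sup>2 < 4 * \<gamma>" "[:\<gamma>, \<beta>, 1:] dvd p"
    by blast
  then show ?thesis
  proof cases
    case root
    then obtain s where s: "p = [:-a, 1:]\<^sup>2 * s"
      using nonneg_poly_root_squared_dvd nonneg by (metis dvd_def)
    have "poly ([:-a, 1:]\<^sup>2) x > 0" if "x \<noteq> a" for x
      using that by simp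
    with s have "\<forall>x. poly s x \<ge> 0"
      by (intro cofactor_nonneg)
    moreover from s have "p = ([:-a, 1:]\<^sup>2 + [:0:]\<^sup>2) * s"
      by simp
    ultimately show ?thesis
      using that by blast
  next
    case quadratic
    then obtain s where s: "p = [:\<gamma>, \<beta>, 1:] * s"
      by (auto simp: dvd_def)
    define c where "c = sqrt (\<gamma> - \<beta>\<^sup>2 / 4)"
    have c_sq: "c\<^sup>2 = \<gamma> - \<beta>\<^sup>2 / 4" "c\<^sup>2 > 0"
      using quadratic(1) by (simp_all add: c_def)
    have G: "[:\<gamma>, \<beta>, 1:] = [:\<beta> / 2, 1:]\<^sup>2 + [:c:]\<^sup>2"
      using c_sq(1) by (simp add: power2_eq_square algebra_simps)
    have "poly ([:\<beta> / 2, 1:]\<^sup>2 + [:c:]\<^sup>2) x > 0" for x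
      using c_sq(2) by (simp add: add_nonneg_pos)
    with s G have "\<forall>x. poly s x \<ge> 0"
      by (intro cofactor_nonneg [of _ _ 0]) auto
    with s G show ?thesis by (intro that) auto
  qed
qed

lemma nonneg_poly_sum_of_squares:
  fixes p :: "real poly"
  assumes "\<forall>x. poly p x \<ge> 0" and "degree p \<le> 2 * d"
  shows "\<exists>hs. (\<forall>h\<in>set hs. degree h \<le> d) \<and> p = (\<Sum>h\<leftarrow>hs. h\<^sup>2)"
  using assms
proof (induction "degree p" arbitrary: p d rule: less_induct)
  case less
  show ?case
  proof (cases "degree p = 0")
    case True
    then obtain c where p: "p = [:c:]"
      by (metis degree_eq_zeroE)
    with less.prems(1) have "p = [:sqrt c:]\<^sup>2"
      by (auto simp: power2_eq_square)
    then show ?thesis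
      by (intro exI [of _ "[[:sqrt c:]]"]) simp
  next
    case False
    with less.prems(1) obtain a c s
      where p: "p = ([:a, 1:]\<^sup>2 + [:c:]\<^sup>2) * s" and s: "\<forall>x. poly s x \<ge> 0"
      by (auto elim: nonneg_poly_quadratic_factor)
    have "[:a, 1:]\<^sup>2 + [:c:]\<^sup>2 \<noteq> 0" "degree ([:a, 1:]\<^sup>2 + [:c:]\<^sup>2) = 2"
      by (simp_all add: power2_eq_square degree_add_eq_left)
    moreover have "s \<noteq> 0"
      using False p by auto
    ultimately have deg_p: "degree p = 2 + degree s"
      unfolding p by (simp add: degree_mult_eq)
    with less.prems(2) have "degree s < degree p" "degree s \<le> 2 * (d - 1)"
      by auto
    with less.hyps s obtain hs
      where hs: "\<forall>h\<in>set hs. degree h \<le> d - 1" "s = (\<Sum>h\<leftarrow>hs. h\<^sup>2)"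
      by blast
    define hs' where "hs' = map (\<lambda>h. [:a, 1:] * h) hs @ map (\<lambda>h. [:c:] * h) hs"
    have "(\<Sum>h\<leftarrow>hs'. h\<^sup>2) = (\<Sum>h\<leftarrow>hs. ([:a, 1:] * h)\<^sup>2) + (\<Sum>h\<leftarrow>hs. ([:c:] * h)\<^sup>2)"
      by (simp only: hs'_def map_append sum_list_append map_map o_def)
    also have "\<dots> = p"
      unfolding p hs(2) power_mult_distrib sum_list_const_mult by (simp add: distrib_right)
    finally have "p = (\<Sum>h\<leftarrow>hs'. h\<^sup>2)" ..
    moreover have "degree h \<le> d" if "h \<in> set hs'" for h
    proof -
      from that obtain h0 e where "h0 \<in> set hs" "h = [:e, 1:] * h0 \<or> h = [:e:] * h0"
        by (auto simp: hs'_def)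
      with hs(1) deg_p less.prems(2) show ?thesis
        using degree_mult_le [of "[:e, 1:]" h0] degree_mult_le [of "[:e:]" h0] by fastforce
    qed
    ultimately show ?thesis by blast
  qed
qed

section \<open>Functionals that are nonnegative on weighted squares\<close>

lemma ideal_principal_generator:
  fixes I :: "'a::euclidean_ring set"
  assumes "g0 \<in> I" "g0 \<noteq> 0"
    and diff: "\<And>a b. a \<in> I \<Longrightarrow> b \<in> I \<Longrightarrow> a - b \<in> I"
    and mult: "\<And>a c. a \<in> I \<Longrightarrow> a * c \<in> I"
  obtains g where "g \<in> I" "g \<noteq> 0" "\<And>a. a \<in> I \<Longrightarrow> g dvd a"
proof -
  define n where "n = (LEAST n. \<exists>g\<in>I. g \<noteq> 0 \<and> euclidean_size g = n)"
  obtain g where g: "g \<in> I" "g \<noteq> 0" "euclidean_size g = n"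
    using LeastI [of "\<lambda>n. \<exists>g\<in>I. g \<noteq> 0 \<and> euclidean_size g = n"] assms(1,2)
    unfolding n_def by blast
  have "g dvd a" if "a \<in> I" for a
  proof (rule ccontr)
    assume "\<not> g dvd a"
    moreover have "a mod g \<in> I"
      using diff [OF that mult [OF g(1), of "a div g"]] by (simp add: minus_mult_div_eq_mod)
    ultimately have "n \<le> euclidean_size (a mod g)"
      unfolding n_def by (intro Least_le) (auto simp: mod_eq_0_iff_dvd)
    with mod_size_less [OF g(2), of a] g(3) show False
      by simp
  qed
  with g show ?thesis using that by blast
qed

lemma poly_interpolation:
  fixes S :: "'a::field set"
  assumes "finite S"
  shows "\<exists>t. \<forall>a\<in>S. poly t a = f a"
  using assms
proof (induction S rule: finite_induct)
  case empty
  then show ?case by simp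
next
  case (insert b S)
  then obtain t where t: "\<forall>a\<in>S. poly t a = f a" by blast
  define V where "V = (\<Prod>a\<in>S. [:-a, 1:])"
  have "poly V a = 0" if "a \<in> S" for a
    using that insert(1) by (auto simp: V_def poly_prod)
  moreover have "poly V b \<noteq> 0"
    using insert(1,2) by (auto simp: V_def poly_prod)
  ultimately have "\<forall>a\<in>insert b S. poly (t + smult ((f b - poly t b) / poly V b) V) a = f a"
    using t by auto
  then show ?case by blast
qed

lemma dvd_if_vanishes_on_roots:
  fixes G q :: "'a::field poly"
  assumes "G \<noteq> 0"
    and squarefree: "\<And>a. \<not> [:-a, 1:]\<^sup>2 dvd G"
    and splits: "\<And>F. F dvd G \<Longrightarrow> degree F > 0 \<Longrightarrow> \<exists>a. poly F a = 0"
    and vanish: "\<And>a. poly G a = 0 \<Longrightarrow> poly q a = 0"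
  shows "G dvd q"
  using assms
proof (induction "degree G" arbitrary: G q rule: less_induct)
  case less
  show ?case
  proof (cases "degree G = 0")
    case True
    with less.prems(1) show ?thesis
      by (simp add: is_unit_iff_degree unit_imp_dvd)
  next
    case False
    then obtain a where "poly G a = 0"
      using less.prems(3) [of G] by auto
    then obtain G1 where G: "G = [:-a, 1:] * G1"
      by (metis poly_eq_0_iff_dvd dvd_def)
    from \<open>poly G a = 0\<close> obtain q1 where q: "q = [:-a, 1:] * q1"
      using less.prems(4) by (metis poly_eq_0_iff_dvd dvd_def)
    have "G1 \<noteq> 0"
      using less.prems(1) G by auto
    then have "degree G1 < degree G"
      unfolding G by (subst degree_mult_eq) auto
    have "poly G1 a \<noteq> 0"
    proof
      assume "poly G1 a = 0"
      then have "[:-a, 1:] dvd G1"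
        by (simp add: poly_eq_0_iff_dvd)
      then have "[:-a, 1:]\<^sup>2 dvd G"
        unfolding G power2_eq_square by (rule mult_dvd_mono [OF dvd_refl])
      with less.prems(2) show False by blast
    qed
    have "G1 dvd G"
      unfolding G by (rule dvd_triv_right)
    have "G1 dvd q1"
    proof (rule less.hyps [OF \<open>degree G1 < degree G\<close> \<open>G1 \<noteq> 0\<close>])
      show "\<not> [:-b, 1:]\<^sup>2 dvd G1" for b
        using less.prems(2) \<open>G1 dvd G\<close> dvd_trans by blast
      show "\<exists>b. poly F b = 0" if "F dvd G1" "degree F > 0" for F
        using less.prems(3) that \<open>G1 dvd G\<close> dvd_trans by blast
      show "poly q1 b = 0" if "poly G1 b = 0" for b
        using less.prems(4) [of b] that \<open>poly G1 a \<noteq> 0\<close> unfolding G q by auto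
    qed
    then show ?thesis
      unfolding G q by (rule mult_dvd_mono [OF dvd_refl])
  qed
qed

lemma annihilator_squarefree:
  fixes L :: "real poly \<Rightarrow> real" and N \<sigma> :: "real poly"
  assumes "N \<noteq> 0" and annihilates: "\<And>X. L (N * X) = 0"
    and pos: "\<And>t. t \<noteq> 0 \<Longrightarrow> degree t < degree N \<Longrightarrow> L (\<sigma> * t\<^sup>2) > 0"
  shows "\<not> [:-a, 1:]\<^sup>2 dvd N"
proof
  assume "[:-a, 1:]\<^sup>2 dvd N"
  then obtain E where N: "N = [:-a, 1:]\<^sup>2 * E"
    by (auto simp: dvd_def)
  with \<open>N \<noteq> 0\<close> have "E \<noteq> 0" by auto
  then have "[:-a, 1:] * E \<noteq> 0"
    by (simp only: mult_eq_0_iff) simp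
  moreover from \<open>E \<noteq> 0\<close> have "degree ([:-a, 1:] * E) = 1 + degree E"
    by (subst degree_mult_eq) simp_all
  moreover from \<open>E \<noteq> 0\<close> have "degree N = 2 + degree E"
    unfolding N by (subst degree_mult_eq) (auto simp: degree_power_eq)
  ultimately have "L (\<sigma> * ([:-a, 1:] * E)\<^sup>2) > 0"
    by (intro pos) auto
  moreover have "\<sigma> * ([:-a, 1:] * E)\<^sup>2 = N * (\<sigma> * E)"
    unfolding N by (intro poly_ext) (simp add: power2_eq_square algebra_simps)
  ultimately show False
    using annihilates [of "\<sigma> * E"] by (simp del: mult_pCons_left)
qed

lemma annihilator_no_positive_quadratic_factor:
  fixes L :: "real poly \<Rightarrow> real" and N \<sigma> :: "real poly"
  assumes add: "\<And>P Q. L (P + Q) = L P + L Q" and smult: "\<And>c P. L (smult c P) = c * L P"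
    and "N \<noteq> 0" and annihilates: "\<And>X. L (N * X) = 0"
    and pos: "\<And>t. t \<noteq> 0 \<Longrightarrow> degree t < degree N \<Longrightarrow> L (\<sigma> * t\<^sup>2) > 0"
    and "\<beta>\<^sup>2 < 4 * \<gamma>"
  shows "\<not> [:\<gamma>, \<beta>, 1:] dvd N"
proof
  assume "[:\<gamma>, \<beta>, 1:] dvd N"
  then obtain E where N: "N = [:\<gamma>, \<beta>, 1:] * E"
    by (auto simp: dvd_def)
  with \<open>N \<noteq> 0\<close> have "E \<noteq> 0" by auto
  then have "L (\<sigma> * E\<^sup>2) > 0" "L (\<sigma> * (E * [:\<beta>, 2:])\<^sup>2) > 0"
    by (auto intro!: pos simp: N degree_mult_eq simp del: mult_pCons_left mult_pCons_right)
  moreover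
  \<comment> \<open>\<open>(\<beta> + 2x)\<^sup>2 = 4(\<gamma> + \<beta>x + x\<^sup>2) + (\<beta>\<^sup>2 - 4\<gamma>)\<close>\<close>
  have "\<sigma> * (E * [:\<beta>, 2:])\<^sup>2 = smult (\<beta>\<^sup>2 - 4 * \<gamma>) (\<sigma> * E\<^sup>2) + N * smult 4 (\<sigma> * E)"
    unfolding N by (intro poly_ext) (simp add: power2_eq_square algebra_simps)
  then have "L (\<sigma> * (E * [:\<beta>, 2:])\<^sup>2) = (\<beta>\<^sup>2 - 4 * \<gamma>) * L (\<sigma> * E\<^sup>2)"
    using add smult annihilates by simp
  ultimately show False
    using \<open>\<beta>\<^sup>2 < 4 * \<gamma>\<close> by (simp add: zero_less_mult_iff)
qed

lemma functional_cong:
  fixes L :: "'a::unique_euclidean_ring \<Rightarrow> 'b::monoid_add"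
  assumes "\<And>P Q. L (P + Q) = L P + L Q" "\<And>X. L (g * X) = 0" "[P = Q] (mod g)"
  shows "L P = L Q"
proof -
  from assms(3) obtain Y where "P = Q + g * Y"
    by (metis cong_iff_dvd_diff diff_add_cancel add.commute dvd_def)
  with assms(1,2) show ?thesis
    by simp
qed

lemma nonneg_functional_if_weighted_squares_nonneg:
  fixes L :: "real poly \<Rightarrow> real" and g \<sigma> p :: "real poly"
  assumes add: "\<And>P Q. L (P + Q) = L P + L Q" and smult: "\<And>c P. L (smult c P) = c * L P"
    and "g \<noteq> 0" "\<And>X. L (g * X) = 0"
    and weight_pos: "\<And>x. poly \<sigma> x > 0"
    and squares_nonneg: "\<And>t. L (\<sigma> * t\<^sup>2) \<ge> 0"
    and null: "\<And>t X. L (\<sigma> * t\<^sup>2) = 0 \<Longrightarrow> L (t * X) = 0"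
    and p_nonneg: "\<And>x. poly p x \<ge> 0"
  shows "L p \<ge> 0"
proof -
  let ?A = "{t. \<forall>X. L (t * X) = 0}"
  obtain N where N: "N \<in> ?A" "N \<noteq> 0" "\<And>t. t \<in> ?A \<Longrightarrow> N dvd t"
  proof (rule ideal_principal_generator [of g])
    show "a - b \<in> ?A" if "a \<in> ?A" "b \<in> ?A" for a b
      using that add [of "a * X - b * X" "b * X" for X] by (simp add: algebra_simps)
    show "a * c \<in> ?A" if "a \<in> ?A" for a c
      using that by (simp add: mult.assoc)
  qed (use assms(3,4) in auto)
  have annihilates: "L (N * X) = 0" for X
    using N(1) by simp
  have N_pos: "L (\<sigma> * t\<^sup>2) > 0" if "t \<noteq> 0" "degree t < degree N" for t
  proof -
    have "\<not> N dvd t"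
      using that by (auto dest: dvd_imp_degree_le)
    then have "L (\<sigma> * t\<^sup>2) \<noteq> 0"
      using N(3) null by blast
    with squares_nonneg [of t] show ?thesis by simp
  qed
  have N_splits: "\<exists>a. poly F a = 0" if "F dvd N" "degree F > 0" for F
    using real_poly_root_or_quadratic_factor [OF \<open>degree F > 0\<close>] \<open>F dvd N\<close> dvd_trans
      annihilator_no_positive_quadratic_factor [OF add smult N(2) annihilates N_pos] by blast
  obtain t where t: "\<forall>a\<in>{a. poly N a = 0}. poly t a = sqrt (poly p a / poly \<sigma> a)"
    using poly_interpolation [OF poly_roots_finite [OF N(2)], of "\<lambda>a. sqrt (poly p a / poly \<sigma> a)"]
    by blast
  have "N dvd p - \<sigma> * t\<^sup>2"
  proof (rule dvd_if_vanishes_on_roots [OF N(2) annihilator_squarefree [OF N(2) annihilates N_pos] N_splits])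
    fix a
    assume "poly N a = 0"
    with t p_nonneg [of a] weight_pos [of a] have "(poly t a)\<^sup>2 = poly p a / poly \<sigma> a"
      by simp
    with weight_pos [of a] show "poly (p - \<sigma> * t\<^sup>2) a = 0"
      by (simp add: field_simps)
  qed
  then have "L p = L (\<sigma> * t\<^sup>2)"
    using functional_cong [OF add annihilates] by (simp add: cong_iff_dvd_diff)
  with squares_nonneg [of t] show ?thesis
    by simp
qed

section \<open>Functionals on polynomials of bounded degree\<close>

lemma degree_mult_le_double:
  "degree a \<le> d \<Longrightarrow> degree b \<le> d \<Longrightarrow> degree (a * b) \<le> 2 * d"
  using degree_mult_le [of a b] by linarith

definition linear_on_degree :: "nat \<Rightarrow> (real poly \<Rightarrow> real) \<Rightarrow> bool" where
  "linear_on_degree n \<phi> \<longleftrightarrow>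
     (\<forall>a b. degree a \<le> n \<longrightarrow> degree b \<le> n \<longrightarrow> \<phi> (a + b) = \<phi> a + \<phi> b) \<and>
     (\<forall>c a. degree a \<le> n \<longrightarrow> \<phi> (smult c a) = c * \<phi> a)"

lemma linear_on_degree_add:
  "linear_on_degree n \<phi> \<Longrightarrow> degree a \<le> n \<Longrightarrow> degree b \<le> n \<Longrightarrow> \<phi> (a + b) = \<phi> a + \<phi> b"
  unfolding linear_on_degree_def by blast

lemma linear_on_degree_smult:
  "linear_on_degree n \<phi> \<Longrightarrow> degree a \<le> n \<Longrightarrow> \<phi> (smult c a) = c * \<phi> a"
  unfolding linear_on_degree_def by blast

lemma linear_on_degree_diff:
  assumes "linear_on_degree n \<phi>" "degree a \<le> n" "degree b \<le> n"
  shows "\<phi> (a - b) = \<phi> a - \<phi> b"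
  using linear_on_degree_add [OF assms(1) assms(2), of "smult (-1) b"]
    linear_on_degree_smult [OF assms(1) assms(3), of "-1"] assms(3)
  by (simp add: order.trans [OF degree_smult_le])

lemma linear_on_degree_compose:
  assumes "linear_on_degree n \<phi>"
    and "\<And>a b. degree a \<le> n \<Longrightarrow> degree b \<le> n \<Longrightarrow> T (a + b) = T a + T b"
    and "\<And>c a. degree a \<le> n \<Longrightarrow> T (smult c a) = smult c (T a)"
    and "\<And>a. degree a \<le> n \<Longrightarrow> degree (T a) \<le> n"
  shows "linear_on_degree n (\<lambda>a. \<phi> (T a))"
  using assms unfolding linear_on_degree_def by simp

lemma linear_on_degree_sum_list:
  assumes "linear_on_degree n \<phi>" "\<And>x. x \<in> set xs \<Longrightarrow> degree (f x) \<le> n"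
  shows "\<phi> (\<Sum>x\<leftarrow>xs. f x) = (\<Sum>x\<leftarrow>xs. \<phi> (f x))"
  using assms(2)
proof (induction xs)
  case Nil
  show ?case
    using linear_on_degree_smult [OF assms(1), of 0 0] by simp
next
  case (Cons x xs)
  have "degree (\<Sum>y\<leftarrow>xs. f y) \<le> n"
    using Cons.prems by (intro degree_sum_list_le) auto
  with Cons show ?case
    by (simp add: linear_on_degree_add [OF assms(1)])
qed

lemma linear_on_degree_extension_mod:
  fixes \<phi> :: "real poly \<Rightarrow> real" and u :: "real poly"
  assumes \<phi>: "linear_on_degree (2 * d) \<phi>" and u: "degree u = d" "u \<noteq> 0"
    and u_annihilates: "\<And>X. degree X \<le> d \<Longrightarrow> \<phi> (u * X) = 0"
  obtains L where "\<And>P Q. L (P + Q) = L P + L Q" and "\<And>c P. L (smult c P) = c * L P"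
    and "\<And>P. degree P \<le> 2 * d \<Longrightarrow> L P = \<phi> P"
    and "\<And>v X. degree v \<le> d \<Longrightarrow> (\<And>X. degree X \<le> d \<Longrightarrow> \<phi> (v * X) = 0) \<Longrightarrow> L (v * X) = 0"
proof
  have deg_mod: "degree (P mod u) < d \<or> P mod u = 0" for P
    using degree_mod_less [OF u(2), of P] u(1) by auto
  then have deg_mod_le: "degree (P mod u) \<le> 2 * d" for P
    by (metis degree_0 le0 less_imp_le_nat trans_le_add1 mult_2)
  show "\<phi> ((P + Q) mod u) = \<phi> (P mod u) + \<phi> (Q mod u)" for P Q
    unfolding poly_mod_add_left by (rule linear_on_degree_add [OF \<phi> deg_mod_le deg_mod_le])
  show "\<phi> (smult c P mod u) = c * \<phi> (P mod u)" for c P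
    unfolding mod_smult_left by (rule linear_on_degree_smult [OF \<phi> deg_mod_le])
  show mod_eq: "\<phi> (P mod u) = \<phi> P" if "degree P \<le> 2 * d" for P
  proof -
    have "degree (P div u) \<le> d"
    proof (cases "P div u = 0")
      case False
      have "d + degree (P div u) = degree (u * (P div u))"
        using False u by (simp add: degree_mult_eq)
      also have "u * (P div u) = P - P mod u"
        by (simp add: minus_mod_eq_mult_div)
      also have "degree \<dots> \<le> 2 * d"
        using that deg_mod_le by (rule degree_diff_le)
      finally show ?thesis by simp
    qed simp
    then have "\<phi> P = \<phi> (u * (P div u)) + \<phi> (P mod u)"
      using linear_on_degree_add [OF \<phi> degree_mult_le_double deg_mod_le, of u "P div u" P] u(1)
      by simp
    with u_annihilates [OF \<open>degree (P div u) \<le> d\<close>] show ?thesis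
      by simp
  qed
  show "\<phi> (v * X mod u) = 0" if v: "degree v \<le> d" "\<And>X. degree X \<le> d \<Longrightarrow> \<phi> (v * X) = 0" for v X
  proof -
    have deg_X: "degree (X mod u) \<le> d"
      using deg_mod [of X] by auto
    have "\<phi> (v * X mod u) = \<phi> (v * (X mod u) mod u)"
      by (simp add: mod_mult_right_eq)
    also have "\<dots> = \<phi> (v * (X mod u))"
      using degree_mult_le_double [OF v(1) deg_X] by (rule mod_eq)
    also have "\<dots> = 0"
      using deg_X by (rule v(2))
    finally show ?thesis .
  qed
qed

lemma quadratic_nonneg_coeffs:
  fixes A B C :: real
  assumes "\<And>\<tau>. 0 \<le> A + 2 * \<tau> * B + \<tau>\<^sup>2 * C"
  shows "0 \<le> C" and "C = 0 \<Longrightarrow> B = 0"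
proof -
  have even: "0 \<le> A + \<tau>\<^sup>2 * C" for \<tau>
    using assms [of \<tau>] assms [of "- \<tau>"] by simp
  show "0 \<le> C"
  proof (rule ccontr)
    assume "\<not> 0 \<le> C"
    then have "(sqrt ((\<bar>A\<bar> + 1) / - C))\<^sup>2 = (\<bar>A\<bar> + 1) / - C"
      by (intro real_sqrt_pow2) (simp add: divide_nonneg_neg)
    with \<open>\<not> 0 \<le> C\<close> have "(sqrt ((\<bar>A\<bar> + 1) / - C))\<^sup>2 * C = - (\<bar>A\<bar> + 1)"
      by simp
    with even [of "sqrt ((\<bar>A\<bar> + 1) / - C)"] show False
      by linarith
  qed
  show "B = 0" if "C = 0"
  proof (rule ccontr)
    assume "B \<noteq> 0"
    then have "2 * (- (\<bar>A\<bar> + 1) / (2 * B)) * B = - (\<bar>A\<bar> + 1)"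
      by simp
    with assms [of "- (\<bar>A\<bar> + 1) / (2 * B)"] show False
      by (simp only: that mult_zero_right add_0_right)
  qed
qed

lemma syzygy_second_order:
  fixes \<phi> C :: "real poly \<Rightarrow> real" and u1 u2 k1 k2 :: "real poly"
  assumes \<phi>: "linear_on_degree (2 * d) \<phi>"
    and second_order:
      "\<And>a b. degree a \<le> d \<Longrightarrow> degree b \<le> d \<Longrightarrow> C (u1 * a + u2 * b) + \<phi> (a\<^sup>2 + b\<^sup>2) \<ge> 0"
    and k: "degree k1 \<le> d" "degree k2 \<le> d" "u1 * k1 + u2 * k2 = 0"
  shows "\<phi> (k1\<^sup>2 + k2\<^sup>2) \<ge> 0"
    and "\<phi> (k1\<^sup>2 + k2\<^sup>2) = 0 \<Longrightarrow> degree a \<le> d \<Longrightarrow> degree b \<le> d \<Longrightarrow> \<phi> (a * k1 + b * k2) = 0"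
proof -
  have along_syzygy: "0 \<le> (C (u1 * a + u2 * b) + \<phi> (a\<^sup>2 + b\<^sup>2)) + 2 * \<tau> * \<phi> (a * k1 + b * k2)
      + \<tau>\<^sup>2 * \<phi> (k1\<^sup>2 + k2\<^sup>2)" if ab: "degree a \<le> d" "degree b \<le> d" for a b \<tau>
  proof -
    have deg: "degree (a + smult \<tau> k1) \<le> d" "degree (b + smult \<tau> k2) \<le> d"
      using ab k by (auto intro!: degree_add_le order.trans [OF degree_smult_le])
    have "u1 * (a + smult \<tau> k1) + u2 * (b + smult \<tau> k2) = u1 * a + u2 * b + smult \<tau> (u1 * k1 + u2 * k2)"
      by (simp add: algebra_simps smult_add_right)
    moreover have "(a + smult \<tau> k1)\<^sup>2 + (b + smult \<tau> k2)\<^sup>2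
        = (a\<^sup>2 + b\<^sup>2) + smult (2 * \<tau>) (a * k1 + b * k2) + smult (\<tau>\<^sup>2) (k1\<^sup>2 + k2\<^sup>2)"
      by (intro poly_ext) (simp add: power2_eq_square algebra_simps)
    moreover have "degree (a\<^sup>2 + b\<^sup>2) \<le> 2 * d" "degree (a * k1 + b * k2) \<le> 2 * d"
      "degree (k1\<^sup>2 + k2\<^sup>2) \<le> 2 * d"
      using ab k by (auto simp: power2_eq_square intro!: degree_add_le degree_mult_le_double)
    then have "\<phi> ((a\<^sup>2 + b\<^sup>2) + smult (2 * \<tau>) (a * k1 + b * k2) + smult (\<tau>\<^sup>2) (k1\<^sup>2 + k2\<^sup>2))
        = \<phi> (a\<^sup>2 + b\<^sup>2) + 2 * \<tau> * \<phi> (a * k1 + b * k2) + \<tau>\<^sup>2 * \<phi> (k1\<^sup>2 + k2\<^sup>2)"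
      using \<phi> by (simp add: linear_on_degree_add linear_on_degree_smult degree_add_le
          order.trans [OF degree_smult_le])
    ultimately show ?thesis
      using second_order [OF deg] k(3) by (simp only: smult_0_right add_0_right)
  qed
  show "\<phi> (k1\<^sup>2 + k2\<^sup>2) \<ge> 0"
    using quadratic_nonneg_coeffs(1) [OF along_syzygy [of 0 0]] by simp
  show "\<phi> (a * k1 + b * k2) = 0"
    if "\<phi> (k1\<^sup>2 + k2\<^sup>2) = 0" "degree a \<le> d" "degree b \<le> d"
    using quadratic_nonneg_coeffs(2) [OF along_syzygy [OF that(2,3)] that(1)] .
qed

lemma weighted_squares_from_syzygies:
  fixes L :: "real poly \<Rightarrow> real" and g w1 w2 A B t :: "real poly"
  assumes add: "\<And>P Q. L (P + Q) = L P + L Q"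
    and "g \<noteq> 0" and g_annihilates: "\<And>X. L (g * X) = 0"
    and deg: "degree (g * w1) \<le> d" "degree (g * w2) \<le> d"
    and bezout: "A * w1 + B * w2 = 1"
    and syzygy_nonneg: "\<And>k1 k2. degree k1 \<le> d \<Longrightarrow> degree k2 \<le> d \<Longrightarrow> w1 * k1 + w2 * k2 = 0 \<Longrightarrow>
      L (k1\<^sup>2 + k2\<^sup>2) \<ge> 0"
    and syzygy_null: "\<And>k1 k2 a b. degree k1 \<le> d \<Longrightarrow> degree k2 \<le> d \<Longrightarrow> w1 * k1 + w2 * k2 = 0 \<Longrightarrow>
      L (k1\<^sup>2 + k2\<^sup>2) = 0 \<Longrightarrow> degree a \<le> d \<Longrightarrow> degree b \<le> d \<Longrightarrow> L (a * k1 + b * k2) = 0"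
  shows "L ((w1\<^sup>2 + w2\<^sup>2) * t\<^sup>2) \<ge> 0"
    and "L ((w1\<^sup>2 + w2\<^sup>2) * t\<^sup>2) = 0 \<Longrightarrow> L (t * X) = 0"
proof -
  note L_cong = functional_cong [OF add g_annihilates]
  have deg_mod: "degree (P mod g) < degree g \<or> P mod g = 0" for P
    using degree_mod_less [OF \<open>g \<noteq> 0\<close>] by auto
  have deg_reduced: "degree (w * (P mod g)) \<le> d" if "degree (g * w) \<le> d" for w P
  proof (cases "w = 0 \<or> P mod g = 0")
    case False
    with that deg_mod [of P] \<open>g \<noteq> 0\<close> show ?thesis
      by (simp add: degree_mult_eq)
  qed auto
  define k1 k2 where "k1 = w2 * (t mod g)" and "k2 = - (w1 * (t mod g))"
  have k: "degree k1 \<le> d" "degree k2 \<le> d" "w1 * k1 + w2 * k2 = 0"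
    using deg_reduced [OF deg(2)] deg_reduced [OF deg(1)] by (auto simp: k1_def k2_def)
  have "[(w1\<^sup>2 + w2\<^sup>2) * t\<^sup>2 = (w1\<^sup>2 + w2\<^sup>2) * (t mod g)\<^sup>2] (mod g)"
    by (intro cong_mult cong_pow cong_refl) (simp add: cong_def)
  then have L_weighted: "L ((w1\<^sup>2 + w2\<^sup>2) * t\<^sup>2) = L (k1\<^sup>2 + k2\<^sup>2)"
    by (intro L_cong) (simp add: k1_def k2_def power_mult_distrib algebra_simps)
  show "L ((w1\<^sup>2 + w2\<^sup>2) * t\<^sup>2) \<ge> 0"
    unfolding L_weighted using syzygy_nonneg [OF k] .
  show "L (t * X) = 0" if "L ((w1\<^sup>2 + w2\<^sup>2) * t\<^sup>2) = 0"
  proof -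
    have "w1 \<noteq> 0 \<or> w2 \<noteq> 0"
      using bezout by auto
    with deg \<open>g \<noteq> 0\<close> have "degree g \<le> d"
      by (auto simp: degree_mult_eq)
    then have "degree (X * B mod g) \<le> d" "degree (- (X * A mod g)) \<le> d"
      using deg_mod [of "X * B"] deg_mod [of "X * A"] by auto
    with syzygy_null [OF k] that have "L ((X * B mod g) * k1 + (- (X * A mod g)) * k2) = 0"
      by (simp only: L_weighted)
    moreover have "[(X * B mod g) * k1 + (- (X * A mod g)) * k2 = (X * B) * (w2 * t) + (X * A) * (w1 * t)] (mod g)"
      unfolding k1_def k2_def minus_mult_minus by (intro cong_add cong_mult cong_refl) (simp_all add: cong_def)
    moreover have "(X * B) * (w2 * t) + (X * A) * (w1 * t) = t * X * (A * w1 + B * w2)"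
      by (simp add: algebra_simps)
    ultimately show ?thesis
      using L_cong bezout by (metis mult.right_neutral)
  qed
qed

lemma gcd_coprime_cofactors:
  fixes a b :: "'a::euclidean_ring_gcd"
  assumes "a \<noteq> 0"
  obtains g w1 w2 A B where "a = g * w1" "b = g * w2" "g \<noteq> 0" "A * w1 + B * w2 = 1"
proof -
  obtain w1 w2 where w: "a = gcd a b * w1" "b = gcd a b * w2"
    by (meson dvd_def gcd_dvd1 gcd_dvd2)
  have "gcd a b \<noteq> 0"
    using assms by simp
  obtain A B where "A * a + B * b = gcd a b"
    using bezout_coefficients_fst_snd by blast
  then have "gcd a b * (A * w1 + B * w2) = gcd a b * 1"
    by (subst (asm) w(1), subst (asm) w(2)) (simp add: algebra_simps)
  with \<open>gcd a b \<noteq> 0\<close> have "A * w1 + B * w2 = 1"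
    by (simp only: mult_cancel_left) simp
  with w \<open>gcd a b \<noteq> 0\<close> show ?thesis
    by (rule that)
qed

lemma second_order_functional_nonneg_full_degree:
  fixes \<phi> C :: "real poly \<Rightarrow> real" and u1 u2 p :: "real poly"
  assumes \<phi>: "linear_on_degree (2 * d) \<phi>"
    and u: "degree u1 = d" "u1 \<noteq> 0" "degree u2 \<le> d"
    and first_order: "\<And>X. degree X \<le> d \<Longrightarrow> \<phi> (u1 * X) = 0" "\<And>X. degree X \<le> d \<Longrightarrow> \<phi> (u2 * X) = 0"
    and second_order:
      "\<And>a b. degree a \<le> d \<Longrightarrow> degree b \<le> d \<Longrightarrow> C (u1 * a + u2 * b) + \<phi> (a\<^sup>2 + b\<^sup>2) \<ge> 0"
    and p: "\<And>x. poly p x \<ge> 0" "degree p \<le> 2 * d"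
  shows "\<phi> p \<ge> 0"
proof -
  obtain L where L: "\<And>P Q. L (P + Q) = L P + L Q" "\<And>c P. L (smult c P) = c * L P"
    "\<And>P. degree P \<le> 2 * d \<Longrightarrow> L P = \<phi> P"
    "\<And>v X. degree v \<le> d \<Longrightarrow> (\<And>X. degree X \<le> d \<Longrightarrow> \<phi> (v * X) = 0) \<Longrightarrow> L (v * X) = 0"
    using linear_on_degree_extension_mod [OF \<phi> u(1,2) first_order(1)] by blast
  obtain g w1 w2 A B where w: "u1 = g * w1" "u2 = g * w2" and "g \<noteq> 0" and bezout: "A * w1 + B * w2 = 1"
    using gcd_coprime_cofactors [OF u(2)] by blast
  have "L (g * X) = 0" for X
  proof -
    have "g * X = g * X * (A * w1 + B * w2)"
      by (simp add: bezout)
    also have "\<dots> = u1 * (A * X) + u2 * (B * X)"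
      by (simp add: w algebra_simps)
    finally show ?thesis
      using L(1) L(4) [OF eq_imp_le [OF u(1)] first_order(1)] L(4) [OF u(3) first_order(2)]
      by simp
  qed
  have L_linear: "linear_on_degree (2 * d) L"
    using L(1,2) by (simp add: linear_on_degree_def)
  have L_second_order: "C (u1 * a + u2 * b) + L (a\<^sup>2 + b\<^sup>2) \<ge> 0"
    if "degree a \<le> d" "degree b \<le> d" for a b
    using second_order [OF that] L(3) [of "a\<^sup>2 + b\<^sup>2"] that
    by (simp add: degree_add_le degree_mult_le_double power2_eq_square)
  have u_syzygy: "u1 * k1 + u2 * k2 = 0" if "w1 * k1 + w2 * k2 = 0" for k1 k2
    using that unfolding w by (simp add: algebra_simps flip: distrib_left)
  note syzygy = syzygy_second_order [OF L_linear L_second_order _ _ u_syzygy]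
  have "degree (g * w1) \<le> d" "degree (g * w2) \<le> d"
    using u w by simp_all
  note weighted_squares = weighted_squares_from_syzygies
    [OF L(1) \<open>g \<noteq> 0\<close> \<open>\<And>X. L (g * X) = 0\<close> this bezout syzygy]
  have "poly (w1\<^sup>2 + w2\<^sup>2) x > 0" for x
  proof -
    have "poly w1 x \<noteq> 0 \<or> poly w2 x \<noteq> 0"
      using arg_cong [OF bezout, of "\<lambda>P. poly P x"] by auto
    then show ?thesis
      by (auto simp: add_pos_nonneg add_nonneg_pos)
  qed
  then have "L p \<ge> 0"
    using nonneg_functional_if_weighted_squares_nonneg [OF L(1,2) \<open>g \<noteq> 0\<close> \<open>\<And>X. L (g * X) = 0\<close>]
      weighted_squares p(1) by blast
  with L(3) [OF p(2)] show ?thesis by simp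
qed

section \<open>A Moebius change of variable\<close>

definition reversal :: "nat \<Rightarrow> 'a::field poly \<Rightarrow> 'a poly" where
  "reversal n f = monom 1 (n - degree f) * reflect_poly f"

lemma coeff_reversal:
  "degree f \<le> n \<Longrightarrow> coeff (reversal n f) k = (if k \<le> n then coeff f (n - k) else 0)"
  unfolding reversal_def coeff_monom_mult coeff_reflect_poly by (auto simp: coeff_eq_0)

lemma degree_reversal_le: "degree f \<le> n \<Longrightarrow> degree (reversal n f) \<le> n"
  by (rule degree_le) (auto simp: coeff_reversal)

lemma reversal_add:
  "degree f \<le> n \<Longrightarrow> degree g \<le> n \<Longrightarrow> reversal n (f + g) = reversal n f + reversal n g"
  by (rule poly_eqI) (simp add: coeff_reversal degree_add_le)

lemma reversal_smult: "degree f \<le> n \<Longrightarrow> reversal n (smult c f) = smult c (reversal n f)"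
  by (rule poly_eqI) (simp add: coeff_reversal order.trans [OF degree_smult_le])

lemma reversal_reversal: "degree f \<le> n \<Longrightarrow> reversal n (reversal n f) = f"
  by (rule poly_eqI) (auto simp: coeff_reversal degree_reversal_le coeff_eq_0)

lemma reversal_mult:
  assumes "degree f \<le> m" "degree g \<le> n"
  shows "reversal (m + n) (f * g) = reversal m f * reversal n g"
proof (cases "f = 0 \<or> g = 0")
  case False
  then have "degree (f * g) = degree f + degree g"
    by (simp add: degree_mult_eq)
  with assms have "reversal (m + n) (f * g)
      = monom 1 ((m - degree f) + (n - degree g)) * (reflect_poly f * reflect_poly g)"
    by (simp add: reversal_def reflect_poly_mult)
  also have "\<dots> = reversal m f * reversal n g"
    using mult_monom [of "1::'a" "m - degree f" 1 "n - degree g"] by (simp add: reversal_def algebra_simps)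
  finally show ?thesis .
qed (auto simp: reversal_def)

lemma poly_reversal:
  "degree f \<le> n \<Longrightarrow> x \<noteq> 0 \<Longrightarrow> poly (reversal n f) x = x ^ n * poly f (inverse x)"
  by (simp add: reversal_def poly_monom poly_reflect_poly_nz power_add [symmetric])

definition moebius :: "'a::field \<Rightarrow> nat \<Rightarrow> 'a poly \<Rightarrow> 'a poly" where
  "moebius b n h = reversal n (h \<circ>\<^sub>p [:b, 1:])"

definition moebius_inv :: "'a::field \<Rightarrow> nat \<Rightarrow> 'a poly \<Rightarrow> 'a poly" where
  "moebius_inv b n P = reversal n P \<circ>\<^sub>p [:-b, 1:]"

lemma moebius_inv_moebius: "degree h \<le> n \<Longrightarrow> moebius_inv b n (moebius b n h) = h"
  by (simp add: moebius_def moebius_inv_def degree_pcompose reversal_reversal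
      pcompose_assoc [symmetric] pcompose_pCons)

lemma degree_moebius_le: "degree h \<le> n \<Longrightarrow> degree (moebius b n h) \<le> n"
  by (simp add: moebius_def degree_reversal_le degree_pcompose)

lemma degree_moebius_inv_le: "degree P \<le> n \<Longrightarrow> degree (moebius_inv b n P) \<le> n"
  by (simp add: moebius_inv_def degree_reversal_le degree_pcompose)

lemma moebius_inv_add:
  "degree P \<le> n \<Longrightarrow> degree Q \<le> n \<Longrightarrow> moebius_inv b n (P + Q) = moebius_inv b n P + moebius_inv b n Q"
  by (simp add: moebius_inv_def reversal_add pcompose_add)

lemma moebius_inv_smult:
  "degree P \<le> n \<Longrightarrow> moebius_inv b n (smult c P) = smult c (moebius_inv b n P)"
  by (simp add: moebius_inv_def reversal_smult pcompose_smult)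

lemma moebius_inv_mult:
  "degree P \<le> m \<Longrightarrow> degree Q \<le> n \<Longrightarrow> moebius_inv b (m + n) (P * Q) = moebius_inv b m P * moebius_inv b n Q"
  by (simp add: moebius_inv_def reversal_mult pcompose_mult)

lemma coeff_moebius_top: "degree h \<le> n \<Longrightarrow> coeff (moebius b n h) n = poly h b"
  by (simp add: moebius_def coeff_reversal degree_pcompose poly_0_coeff_0 [symmetric] poly_pcompose)

lemma poly_moebius:
  "degree h \<le> n \<Longrightarrow> x \<noteq> 0 \<Longrightarrow> poly (moebius b n h) x = x ^ n * poly h (b + inverse x)"
  by (simp add: moebius_def poly_reversal degree_pcompose poly_pcompose)

lemma degree_moebius_eq: "degree h \<le> n \<Longrightarrow> poly h b \<noteq> 0 \<Longrightarrow> degree (moebius b n h) = n"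
  using degree_moebius_le [of h n b] coeff_moebius_top [of h n b] le_degree [of "moebius b n h" n]
  by simp

lemma poly_moebius_nonneg:
  fixes p :: "real poly"
  assumes "\<And>x. poly p x \<ge> 0" "degree p \<le> 2 * d"
  shows "poly (moebius b (2 * d) p) x \<ge> 0"
proof -
  have "poly (moebius b (2 * d) p) y \<ge> 0" if "y \<noteq> 0" for y
    using assms that by (simp add: poly_moebius power_mult mult.commute [of 2 d])
  then show ?thesis
    by (cases "x = 0") (auto intro: poly_nonneg_at_isolated_point)
qed

lemma second_order_functional_nonneg:
  fixes \<phi> C :: "real poly \<Rightarrow> real" and u1 u2 p :: "real poly"
  assumes \<phi>: "linear_on_degree (2 * d) \<phi>"
    and u: "degree u1 \<le> d" "u1 \<noteq> 0" "degree u2 \<le> d"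
    and first_order: "\<And>X. degree X \<le> d \<Longrightarrow> \<phi> (u1 * X) = 0" "\<And>X. degree X \<le> d \<Longrightarrow> \<phi> (u2 * X) = 0"
    and second_order:
      "\<And>a b. degree a \<le> d \<Longrightarrow> degree b \<le> d \<Longrightarrow> C (u1 * a + u2 * b) + \<phi> (a\<^sup>2 + b\<^sup>2) \<ge> 0"
    and p: "\<And>x. poly p x \<ge> 0" "degree p \<le> 2 * d"
  shows "\<phi> p \<ge> 0"
proof -
  \<comment> \<open>move a point where \<open>u1\<close> does not vanish to infinity, so that \<open>u1\<close> gets full degree \<open>d\<close>\<close>
  obtain b where b: "poly u1 b \<noteq> 0"
    using u(2) poly_all_0_iff_0 by blast
  let ?S = "moebius_inv b"
  have S_mult: "?S (2 * d) (P * Q) = ?S d P * ?S d Q" if "degree P \<le> d" "degree Q \<le> d" for P Q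
    using moebius_inv_mult [OF that, of b] by (simp add: mult_2)
  have deg_S: "degree (?S d P) \<le> d" if "degree P \<le> d" for P
    using that by (rule degree_moebius_inv_le)
  define v1 v2 where "v1 = moebius b d u1" and "v2 = moebius b d u2"
  have v: "degree v1 \<le> d" "degree v2 \<le> d" "?S d v1 = u1" "?S d v2 = u2"
    using u by (simp_all add: v1_def v2_def degree_moebius_le moebius_inv_moebius)
  have "degree v1 = d" "v1 \<noteq> 0"
    using degree_moebius_eq [OF u(1) b] coeff_moebius_top [OF u(1), of b] b by (auto simp: v1_def)
  have "\<phi> (?S (2 * d) (moebius b (2 * d) p)) \<ge> 0"
  proof (rule second_order_functional_nonneg_full_degree
      [where \<phi> = "\<lambda>P. \<phi> (?S (2 * d) P)" and C = "\<lambda>P. C (?S (2 * d) P)"])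
    show "linear_on_degree (2 * d) (\<lambda>P. \<phi> (?S (2 * d) P))"
      by (rule linear_on_degree_compose [OF \<phi>])
        (simp_all add: moebius_inv_add moebius_inv_smult degree_moebius_inv_le)
    show "\<phi> (?S (2 * d) (v1 * X)) = 0" "\<phi> (?S (2 * d) (v2 * X)) = 0" if "degree X \<le> d" for X
      using first_order [OF deg_S [OF that]] by (simp_all add: S_mult v that)
    show "C (?S (2 * d) (v1 * a + v2 * c)) + \<phi> (?S (2 * d) (a\<^sup>2 + c\<^sup>2)) \<ge> 0"
      if "degree a \<le> d" "degree c \<le> d" for a c
    proof -
      have "?S (2 * d) (v1 * a + v2 * c) = u1 * ?S d a + u2 * ?S d c"
        using that v by (simp add: moebius_inv_add S_mult degree_mult_le_double)
      moreover have "?S (2 * d) (a\<^sup>2 + c\<^sup>2) = (?S d a)\<^sup>2 + (?S d c)\<^sup>2"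
        using that by (simp add: moebius_inv_add S_mult degree_mult_le_double power2_eq_square)
      ultimately show ?thesis
        using second_order [OF deg_S [OF that(1)] deg_S [OF that(2)]] by simp
    qed
  qed (use \<open>degree v1 = d\<close> \<open>v1 \<noteq> 0\<close> v(2) p degree_moebius_le poly_moebius_nonneg in auto)
  with p(2) show ?thesis
    by (simp add: moebius_inv_moebius)
qed

section \<open>The objective along a line\<close>

lemma poly_has_real_derivative_at_0: "(poly P has_real_derivative coeff P 1) (at 0)"
  using poly_DERIV [of P 0] by (simp add: poly_0_coeff_0 coeff_pderiv)

lemma deriv_deriv_poly_at_0: "deriv (deriv (poly P)) 0 = 2 * coeff P 2" for P :: "real poly"
proof -
  have "deriv (poly Q) = poly (pderiv Q)" for Q :: "real poly"
    using poly_DERIV [of Q] by (intro ext DERIV_imp_deriv) simp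
  then show ?thesis
    by (simp add: poly_0_coeff_0 coeff_pderiv numeral_2_eq_2)
qed

context
  fixes n :: nat and ip :: "real poly \<Rightarrow> real poly \<Rightarrow> real"
  assumes ip: "is_inner_product_on n ip"
begin

lemma inner_product_sym: "degree a \<le> n \<Longrightarrow> degree b \<le> n \<Longrightarrow> ip a b = ip b a"
  using ip unfolding is_inner_product_on_def by blast

lemma inner_product_linear_left: "linear_on_degree n (\<lambda>a. ip a b)" if "degree b \<le> n"
  using ip that unfolding is_inner_product_on_def linear_on_degree_def by blast

lemma inner_product_linear_right: "linear_on_degree n (ip a)" if "degree a \<le> n"
  using inner_product_linear_left [OF that] inner_product_sym that
  unfolding linear_on_degree_def by (simp add: degree_add_le order.trans [OF degree_smult_le])

lemma inner_product_nonneg: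
  assumes "degree a \<le> n"
  shows "ip a a \<ge> 0"
proof (cases "a = 0")
  case True
  then show ?thesis
    using linear_on_degree_smult [OF inner_product_linear_right [of 0], of 0 0] by simp
next
  case False
  with assms ip show ?thesis
    unfolding is_inner_product_on_def by (simp add: less_imp_le)
qed

lemma inner_product_quadratic_path:
  assumes "degree q \<le> n" "degree W \<le> n" "degree S \<le> n"
  shows "ip (q + smult t W + smult (t\<^sup>2) S) (q + smult t W + smult (t\<^sup>2) S)
    = poly [:ip q q, 2 * ip q W, ip W W + 2 * ip q S, 2 * ip W S, ip S S:] t"
proof -
  have expand: "ip X (q + smult t W + smult (t\<^sup>2) S) = ip X q + t * ip X W + t\<^sup>2 * ip X S"
    and expand': "ip (q + smult t W + smult (t\<^sup>2) S) X = ip q X + t * ip W X + t\<^sup>2 * ip S X"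
    if "degree X \<le> n" for X
    using assms
    by (simp_all add: linear_on_degree_add [OF inner_product_linear_right [OF that]]
        linear_on_degree_smult [OF inner_product_linear_right [OF that]]
        linear_on_degree_add [OF inner_product_linear_left [OF that]]
        linear_on_degree_smult [OF inner_product_linear_left [OF that]]
        degree_add_le order.trans [OF degree_smult_le])
  have "degree (q + smult t W + smult (t\<^sup>2) S) \<le> n"
    using assms by (simp add: degree_add_le order.trans [OF degree_smult_le])
  then have "ip (q + smult t W + smult (t\<^sup>2) S) (q + smult t W + smult (t\<^sup>2) S)
      = (ip q q + t * ip W q + t\<^sup>2 * ip S q) + t * (ip q W + t * ip W W + t\<^sup>2 * ip S W)
        + t\<^sup>2 * (ip q S + t * ip W S + t\<^sup>2 * ip S S)"
    using assms by (simp only: expand expand')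
  also have "\<dots> = poly [:ip q q, 2 * ip q W, ip W W + 2 * ip q S, 2 * ip W S, ip S S:] t"
    using assms by (simp add: inner_product_sym [of W q] inner_product_sym [of S q]
        inner_product_sym [of S W] algebra_simps power2_eq_square)
  finally show ?thesis .
qed

end

lemma degree_sum_products_le:
  assumes "u \<in> poly_tuples d r" "v \<in> poly_tuples d r"
  shows "degree (\<Sum>i<r. u i * v i) \<le> 2 * d"
  using assms by (intro degree_sum_le degree_mult_le_double) (auto simp: poly_tuples_def)

lemma line_restr_fp:
  assumes ip: "is_inner_product_on (2 * d) ip" and "degree p \<le> 2 * d"
    and uv: "u \<in> poly_tuples d r" "v \<in> poly_tuples d r"
    and q: "q = (\<Sum>i<r. (u i)\<^sup>2) - p" and w: "w = (\<Sum>i<r. u i * v i)" and S: "S = (\<Sum>i<r. (v i)\<^sup>2)"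
  shows "line_restr (fp ip r p) u v
    = poly [:ip q q, 4 * ip q w, 4 * ip w w + 2 * ip q S, 4 * ip w S, ip S S:]"
proof
  fix t
  have deg: "degree q \<le> 2 * d" "degree w \<le> 2 * d" "degree S \<le> 2 * d"
    using degree_sum_products_le [OF uv(1) uv(1)] degree_sum_products_le [OF uv(2) uv(2)]
      degree_sum_products_le [OF uv] \<open>degree p \<le> 2 * d\<close>
    by (simp_all add: q w S power2_eq_square degree_diff_le)
  have "(\<Sum>i<r. (u i + smult t (v i))\<^sup>2) - p = q + smult t (smult 2 w) + smult (t\<^sup>2) S"
    unfolding q w S
    by (intro poly_ext) (simp add: poly_sum sum.distrib sum_distrib_left algebra_simps power2_eq_square)
  then have "line_restr (fp ip r p) u v t
      = ip (q + smult t (smult 2 w) + smult (t\<^sup>2) S) (q + smult t (smult 2 w) + smult (t\<^sup>2) S)"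
    unfolding line_restr_def fp_def Let_def by (simp only:)
  also have "\<dots> = poly [:ip q q, 2 * ip q (smult 2 w), ip (smult 2 w) (smult 2 w) + 2 * ip q S,
          2 * ip (smult 2 w) S, ip S S:] t"
    using deg(2) by (intro inner_product_quadratic_path [OF ip deg(1) _ deg(3)] order.trans [OF degree_smult_le])
  also have "\<dots> = poly [:ip q q, 4 * ip q w, 4 * ip w w + 2 * ip q S, 4 * ip w S, ip S S:] t"
    using deg linear_on_degree_smult [OF inner_product_linear_right [OF ip], of _ w 2]
      linear_on_degree_smult [OF inner_product_linear_left [OF ip], of _ w 2]
    by (simp add: order.trans [OF degree_smult_le])
  finally show "line_restr (fp ip r p) u v t
      = poly [:ip q q, 4 * ip q w, 4 * ip w w + 2 * ip q S, 4 * ip w S, ip S S:] t" .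
qed

lemma fp_first_order:
  assumes "is_inner_product_on (2 * d) ip" "degree p \<le> 2 * d"
    and "u \<in> poly_tuples d r" "v \<in> poly_tuples d r"
    and "grad_zero d r (fp ip r p) u"
  shows "ip ((\<Sum>i<r. (u i)\<^sup>2) - p) (\<Sum>i<r. u i * v i) = 0"
proof -
  note line = line_restr_fp [OF assms(1-4) refl refl refl]
  have "(line_restr (fp ip r p) u v has_real_derivative 0) (at 0)"
    using assms(4,5) by (simp add: grad_zero_def)
  with poly_has_real_derivative_at_0 show ?thesis
    unfolding line by (fastforce dest: DERIV_unique)
qed

lemma fp_second_order:
  assumes "is_inner_product_on (2 * d) ip" "degree p \<le> 2 * d"
    and "u \<in> poly_tuples d r" "v \<in> poly_tuples d r"
    and "hess_psd d r (fp ip r p) u"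
  shows "2 * ip (\<Sum>i<r. u i * v i) (\<Sum>i<r. u i * v i) + ip ((\<Sum>i<r. (u i)\<^sup>2) - p) (\<Sum>i<r. (v i)\<^sup>2) \<ge> 0"
proof -
  note line = line_restr_fp [OF assms(1-4) refl refl refl]
  have "deriv (deriv (line_restr (fp ip r p) u v)) 0 \<ge> 0"
    using assms(4,5) by (simp add: hess_psd_def)
  then show ?thesis
    unfolding line deriv_deriv_poly_at_0 by (simp add: numeral_2_eq_2)
qed

lemma sum_two_point_support:
  fixes g :: "nat \<Rightarrow> 'a::zero \<Rightarrow> 'b::comm_monoid_add" and a b :: 'a
  assumes "i < r" "j < r" "i \<noteq> j" "\<And>k. g k 0 = 0"
  shows "(\<Sum>k<r. g k (if k = i then a else if k = j then b else 0)) = g i a + g j b"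
proof -
  have "(\<Sum>k<r. g k (if k = i then a else if k = j then b else 0))
      = (\<Sum>k<r. (if k = i then g i a else 0) + (if k = j then g j b else 0))"
    using assms(3,4) by (intro sum.cong) auto
  with assms(1,2) show ?thesis
    by (simp add: sum.distrib)
qed

lemma tuple_second_order_functional_nonneg:
  fixes \<phi> C :: "real poly \<Rightarrow> real" and u :: "nat \<Rightarrow> real poly"
  assumes "r \<ge> 2" and \<phi>: "linear_on_degree (2 * d) \<phi>" and "u \<in> poly_tuples d r"
    and first_order: "\<And>v. v \<in> poly_tuples d r \<Longrightarrow> \<phi> (\<Sum>i<r. u i * v i) = 0"
    and second_order: "\<And>v. v \<in> poly_tuples d r \<Longrightarrow> C (\<Sum>i<r. u i * v i) + \<phi> (\<Sum>i<r. (v i)\<^sup>2) \<ge> 0"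
    and p: "\<And>x. poly p x \<ge> 0" "degree p \<le> 2 * d"
  shows "\<phi> p \<ge> 0"
proof -
  have deg_u: "degree (u i) \<le> d" if "i < r" for i
    using \<open>u \<in> poly_tuples d r\<close> that by (simp add: poly_tuples_def)
  have pair: "\<phi> (u i * a + u j * b) = 0" "C (u i * a + u j * b) + \<phi> (a\<^sup>2 + b\<^sup>2) \<ge> 0"
    if "i < r" "j < r" "i \<noteq> j" "degree a \<le> d" "degree b \<le> d" for i j a b
  proof -
    let ?v = "\<lambda>k. if k = i then a else if k = j then b else 0"
    have v: "?v \<in> poly_tuples d r"
      using that by (simp add: poly_tuples_def)
    note sums = sum_two_point_support [OF that(1-3), of "\<lambda>k x. u k * x" a b, OF mult_zero_right]
      sum_two_point_support [OF that(1-3), of "\<lambda>k x. x\<^sup>2" a b, OF zero_power2]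
    show "\<phi> (u i * a + u j * b) = 0" "C (u i * a + u j * b) + \<phi> (a\<^sup>2 + b\<^sup>2) \<ge> 0"
      using first_order [OF v, unfolded sums] second_order [OF v, unfolded sums] by simp_all
  qed
  have other_index: "\<exists>i<r. i \<noteq> j" for j
    using \<open>r \<ge> 2\<close> by (intro exI [of _ "if j = 0 then 1 else 0"]) auto
  have annihilates: "\<phi> (u j * X) = 0" if "j < r" "degree X \<le> d" for j X
    using other_index [of j] pair(1) [of j _ X 0] that by auto
  show ?thesis
  proof (cases "\<exists>j<r. u j \<noteq> 0")
    case True
    then obtain j i where "j < r" "u j \<noteq> 0" "i < r" "i \<noteq> j"
      using other_index by blast
    then show ?thesis
      using second_order_functional_nonneg [OF \<phi> deg_u _ deg_u annihilates annihilates pair(2) p]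
      by blast
  next
    case False
    with \<open>r \<ge> 2\<close> have "u 0 = 0" "u 1 = 0"
      by auto
    then have "\<phi> (h\<^sup>2) \<ge> 0" if "degree h \<le> d" for h
      using syzygy_second_order(1) [OF \<phi> pair(2) [of 0 1] that, of 0] \<open>r \<ge> 2\<close> by simp
    moreover obtain hs where "\<forall>h\<in>set hs. degree h \<le> d" "p = (\<Sum>h\<leftarrow>hs. h\<^sup>2)"
      using nonneg_poly_sum_of_squares p by blast
    ultimately show ?thesis
      by (simp add: linear_on_degree_sum_list [OF \<phi>] degree_mult_le_double power2_eq_square)
        (auto intro!: sum_list_nonneg)
  qed
qed

theorem theorem1p1:
  fixes d r :: nat and ip :: "real poly \<Rightarrow> real poly \<Rightarrow> real"
    and p :: "real poly" and u :: "nat \<Rightarrow> real poly"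
  assumes "r \<ge> 2"
    and "is_inner_product_on (2 * d) ip"
    and "degree p \<le> 2 * d"
    and "\<forall>x. poly p x \<ge> 0"
    and "u \<in> poly_tuples d r"
    and "grad_zero d r (fp ip r p) u"
    and "hess_psd d r (fp ip r p) u"
  shows "fp ip r p u = 0"
proof -
  define q where "q = (\<Sum>i<r. (u i)\<^sup>2) - p"
  have deg_q: "degree q \<le> 2 * d"
    using degree_sum_products_le [OF assms(5,5)] assms(3)
    by (simp add: q_def power2_eq_square degree_diff_le)
  note \<phi> = inner_product_linear_right [OF assms(2) deg_q]
  have "ip q p \<ge> 0"
    using tuple_second_order_functional_nonneg [OF assms(1) \<phi> assms(5), where C = "\<lambda>w. 2 * ip w w"]
      fp_first_order [OF assms(2,3,5) _ assms(6)] fp_second_order [OF assms(2,3,5) _ assms(7)] assms(3,4)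
    by (simp add: q_def)
  moreover have "ip q (\<Sum>i<r. (u i)\<^sup>2) = 0"
    using fp_first_order [OF assms(2,3,5,5,6)] by (simp add: q_def power2_eq_square)
  ultimately have "ip q q \<le> 0"
    using linear_on_degree_diff [OF \<phi> _ assms(3)] degree_sum_products_le [OF assms(5,5)]
    by (simp add: q_def power2_eq_square)
  with inner_product_nonneg [OF assms(2) deg_q] show ?thesis
    by (simp add: fp_def q_def)
qed

end
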